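(* A clone $\tau$-algebra $\mathbf C$ is minimal if and only if $\mathbf C$ is isomorphic to the clone $\mathcal V$-algebra $\mathbf{Cl}(\mathcal V)$ for some variety $\mathcal V$ of $\tau$-algebras.
   Context: A clone $\tau$-algebra is an algebra $\mathbf C=(C,\sigma^{\mathbf C}\ (\sigma\in\tau),q_n^{\mathbf C}\ (n\ge0),\mathsf e_i^{\mathbf C}\ (i\ge1))$ with $\mathsf e_i$ nullary, $q_n$ of arity $n+1$, satisfying: (C1) $q_n(\mathsf e_i,x_1,\dots,x_n)=x_i$ ($1\le i\le n$); (C2) $q_n(\mathsf e_j,x_1,\dots,x_n)=\mathsf e_j$ ($j>n$); (C3) $q_n(x,\mathsf e_1,\dots,\mathsf e_n)=x$; (C4) $q_k(x,y_1,\dots,y_k)=q_n(x,y_1,\dots,y_k,\mathsf e_{k+1},\dots,\mathsf e_n)$ ($n>k$); (C5) $q_n(q_n(x,\mathbf y),\mathbf z)=q_n(x,q_n(y_1,\mathbf z),\dots,q_n(y_n,\mathbf z))$; (C6) $q_n(\sigma(x_1,\dots,x_k),\mathbf y)=\sigma(q_n(x_1,\mathbf y),\dots,q_n(x_k,\mathbf y))$ for $\sigma\in\tau$ of arity $k$. $\mathbf C$ is minimal if $C$ equals the smallest subset of $C$ containing all $\mathsf e_i^{\mathbf C}$ and closed under the operations $\sigma^{\mathbf C}$ ($\sigma\in\tau$). For a variety $\mathcal V$ of $\tau$-algebras with free algebra $\mathbf F_{\mathcal V}$ over $\{v_1,v_2,\dots\}$, the clone $\mathcal V$-algebra $\mathbf{Cl}(\mathcal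 V)=(\mathbf F_{\mathcal V},q_n^{\mathbf F},\mathsf e_i^{\mathbf F})$ has $\mathsf e_i^{\mathbf F}=v_i$ and $q_n^{\mathbf F}(a,b_1,\dots,b_n)=s(a)$, where $s$ is the unique endomorphism of $\mathbf F_{\mathcal V}$ with $s(v_i)=b_i$ for $i\le n$ and $s(v_i)=v_i$ for $i>n$. *)

theory Defs
  imports Main
begin

text \<open>Terms over the countable set of variables
  v_1, v_2, ... ; the variable v_i is represented by Var (i - 1).\<close>

datatype 's trm = Var nat | App 's "'s trm list"

inductive wf_trm :: "('s \<Rightarrow> nat) \<Rightarrow> 's trm \<Rightarrow> bool" for ar where
  wf_Var: "wf_trm ar (Var i)"
| wf_App: "length ts = ar s \<Longrightarrow> (\<And>t. t \<in> set ts \<Longrightarrow> wf_trm ar t) \<Longrightarrow> wf_trm ar (App s ts)"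

primrec subst :: "(nat \<Rightarrow> 's trm) \<Rightarrow> 's trm \<Rightarrow> 's trm" where
  "subst f (Var i) = f i"
| "subst f (App s ts) = App s (map (subst f) ts)"

text \<open>Equational theories of varieties of tau-algebras: fully invariant congruences of
  the term algebra over countably many variables (Birkhoff correspondence between
  varieties and equational theories).\<close>

definition fi_congruence :: "('s \<Rightarrow> nat) \<Rightarrow> ('s trm \<times> 's trm) set \<Rightarrow> bool" where
  "fi_congruence ar \<theta> \<longleftrightarrow>
     equiv {t. wf_trm ar t} \<theta>
   \<and> (\<forall>s ts us. length ts = ar s \<and> length us = ar s \<and> list_all2 (\<lambda>t u. (t, u) \<in> \<theta>) ts us
          \<longrightarrow> (App s ts, App s us) \<in> \<theta>)
   \<and> (\<forall>f t u. (t, u) \<in> \<theta> \<and> (\<forall>i. wf_trm ar (f i)) \<longrightarrow> (subst f t, subst f u) \<in> \<theta>)"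

text \<open>sop s xs: the basic operation s applied to the list xs (of length ar s);
  qop n x ys: q_n(x, y_1, ..., y_n) with ys = [y_1, ..., y_n];
  eop i: the constant e_i (only i >= 1 is meaningful).\<close>

record ('s, 'c) clone_alg =
  carrier :: "'c set"
  sop :: "'s \<Rightarrow> 'c list \<Rightarrow> 'c"
  qop :: "nat \<Rightarrow> 'c \<Rightarrow> 'c list \<Rightarrow> 'c"
  eop :: "nat \<Rightarrow> 'c"

definition is_clone_alg :: "('s \<Rightarrow> nat) \<Rightarrow> ('s, 'c) clone_alg \<Rightarrow> bool" where
  "is_clone_alg ar A \<longleftrightarrow>
     (let C = carrier A; q = qop A; e = eop A; f = sop A in
     \<comment> \<open>closure: A is an algebra of the given type\<close>
       (\<forall>i\<ge>1. e i \<in> C)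
     \<and> (\<forall>s xs. length xs = ar s \<and> set xs \<subseteq> C \<longrightarrow> f s xs \<in> C)
     \<and> (\<forall>n x ys. x \<in> C \<and> length ys = n \<and> set ys \<subseteq> C \<longrightarrow> q n x ys \<in> C)
     \<comment> \<open>(C1)\<close>
     \<and> (\<forall>n i xs. 1 \<le> i \<and> i \<le> n \<and> length xs = n \<and> set xs \<subseteq> C \<longrightarrow> q n (e i) xs = xs ! (i - 1))
     \<comment> \<open>(C2)\<close>
     \<and> (\<forall>n j xs. j > n \<and> length xs = n \<and> set xs \<subseteq> C \<longrightarrow> q n (e j) xs = e j)
     \<comment> \<open>(C3)\<close>
     \<and> (\<forall>n x. x \<in> C \<longrightarrow> q n x (map e [1..<n+1]) = x)
     \<comment> \<open>(C4)\<close>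
     \<and> (\<forall>n k x ys. n > k \<and> x \<in> C \<and> length ys = k \<and> set ys \<subseteq> C \<longrightarrow>
           q k x ys = q n x (ys @ map e [k+1..<n+1]))
     \<comment> \<open>(C5)\<close>
     \<and> (\<forall>n x ys zs. x \<in> C \<and> length ys = n \<and> set ys \<subseteq> C \<and> length zs = n \<and> set zs \<subseteq> C \<longrightarrow>
           q n (q n x ys) zs = q n x (map (\<lambda>y. q n y zs) ys))
     \<comment> \<open>(C6)\<close>
     \<and> (\<forall>n s xs ys. length xs = ar s \<and> set xs \<subseteq> C \<and> length ys = n \<and> set ys \<subseteq> C \<longrightarrow>
           q n (f s xs) ys = f s (map (\<lambda>x. q n x ys) xs)))"

inductive_set generated :: "('s \<Rightarrow> nat) \<Rightarrow> ('s, 'c) clone_alg \<Rightarrow> 'c set" for ar A where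
  gen_e: "1 \<le> i \<Longrightarrow> eop A i \<in> generated ar A"
| gen_op: "length xs = ar s \<Longrightarrow> xs \<in> lists (generated ar A) \<Longrightarrow> sop A s xs \<in> generated ar A"

definition minimal_clone_alg :: "('s \<Rightarrow> nat) \<Rightarrow> ('s, 'c) clone_alg \<Rightarrow> bool" where
  "minimal_clone_alg ar A \<longleftrightarrow> carrier A = generated ar A"

definition clone_iso :: "('s \<Rightarrow> nat) \<Rightarrow> ('s, 'c) clone_alg \<Rightarrow> ('s, 'd) clone_alg \<Rightarrow> bool" where
  "clone_iso ar A B \<longleftrightarrow> (\<exists>h. bij_betw h (carrier A) (carrier B)
     \<and> (\<forall>i\<ge>1. h (eop A i) = eop B i)
     \<and> (\<forall>s xs. length xs = ar s \<and> set xs \<subseteq> carrier A \<longrightarrow> h (sop A s xs) = sop B s (map h xs))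
     \<and> (\<forall>n x ys. x \<in> carrier A \<and> length ys = n \<and> set ys \<subseteq> carrier A \<longrightarrow>
           h (qop A n x ys) = qop B n (h x) (map h ys)))"

text \<open>For the variety V with equational theory theta, the free algebra F_V is the
  quotient of the term algebra by theta; elements are theta-classes.  Operations are
  computed on chosen representatives (well defined since theta is a fully invariant
  congruence).  q_n(a, b_1..b_n) applies the substitution v_i |-> b_i (i <= n),
  v_i |-> v_i (i > n).\<close>

definition rep :: "'a set \<Rightarrow> 'a" where
  "rep X = (SOME t. t \<in> X)"

definition clone_of_var :: "('s \<Rightarrow> nat) \<Rightarrow> ('s trm \<times> 's trm) set \<Rightarrow> ('s, 's trm set) clone_alg" where
  "clone_of_var ar \<theta> =
     \<lparr> carrier = {t. wf_trm ar t} // \<theta>,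
       sop = (\<lambda>s Xs. \<theta> `` {App s (map rep Xs)}),
       qop = (\<lambda>n X Ys. \<theta> `` {subst (\<lambda>j. if j < n then rep (Ys ! j) else Var j) (rep X)}),
       eop = (\<lambda>i. \<theta> `` {Var (i - 1)}) \<rparr>"

end

theory Submission
  imports Defs
begin

(* Evaluating a term t at the constants e_1, e_2, ... maps the well-formed terms onto the
   generated part of a clone algebra A.  By (C1) and (C6), q_N computes substitution:
   the value of t[v_i := u_i] is q_N(value of t, values of the u_i), so the kernel of
   evaluation is closed under substitution and is the equational theory of a variety V.
   When A is minimal, sending c to its fibre of terms is then an isomorphism onto Cl(V).
   Conversely Cl(V) is generated by the classes of the variables, and an isomorphism
   commutes with evaluation of terms, so it carries minimality back to A. *)

primrec trm_vars :: "'s trm \<Rightarrow> nat set" where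
  "trm_vars (Var i) = {i}"
| "trm_vars (App s ts) = \<Union>(set (map trm_vars ts))"

lemma finite_trm_vars: "finite (trm_vars t)"
  by (induction t) auto

lemma wf_trm_subst: "wf_trm ar t \<Longrightarrow> (\<And>i. wf_trm ar (g i)) \<Longrightarrow> wf_trm ar (subst g t)"
  by (induction t rule: wf_trm.induct) (auto intro!: wf_trm.intros)

lemma set_subset_imageE:
  assumes "set xs \<subseteq> f ` S"
  obtains ys where "set ys \<subseteq> S" "xs = map f ys"
proof -
  have "xs \<in> lists (f ` S)" using assms by auto
  then show ?thesis using that by (auto simp: lists_image)
qed

lemma clone_alg_axioms:
  assumes "is_clone_alg ar A"
  shows clone_alg_eop_closed: "\<And>i. 1 \<le> i \<Longrightarrow> eop A i \<in> carrier A"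
    and clone_alg_sop_closed:
      "\<And>s xs. length xs = ar s \<Longrightarrow> set xs \<subseteq> carrier A \<Longrightarrow> sop A s xs \<in> carrier A"
    and clone_alg_qop_eop: "\<And>n i xs. 1 \<le> i \<Longrightarrow> i \<le> n \<Longrightarrow> length xs = n \<Longrightarrow> set xs \<subseteq> carrier A \<Longrightarrow>
      qop A n (eop A i) xs = xs ! (i - 1)"
    and clone_alg_qop_pad: "\<And>n k x ys. k < n \<Longrightarrow> x \<in> carrier A \<Longrightarrow> length ys = k \<Longrightarrow>
      set ys \<subseteq> carrier A \<Longrightarrow> qop A k x ys = qop A n x (ys @ map (eop A) [k+1..<n+1])"
    and clone_alg_qop_sop: "\<And>n s xs ys. length xs = ar s \<Longrightarrow> set xs \<subseteq> carrier A \<Longrightarrow>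
      length ys = n \<Longrightarrow> set ys \<subseteq> carrier A \<Longrightarrow>
      qop A n (sop A s xs) ys = sop A s (map (\<lambda>x. qop A n x ys) xs)"
  using assms unfolding is_clone_alg_def Let_def by (elim conjE; metis)+

(* Var i is the variable v_(i+1), so it evaluates to e_(i+1). *)
primrec eval_trm :: "('s, 'c) clone_alg \<Rightarrow> 's trm \<Rightarrow> 'c" where
  "eval_trm A (Var i) = eop A (Suc i)"
| "eval_trm A (App s ts) = sop A s (map (eval_trm A) ts)"

lemma eval_trm_closed:
  assumes "is_clone_alg ar A"
  shows "wf_trm ar t \<Longrightarrow> eval_trm A t \<in> carrier A"
  by (induction t rule: wf_trm.induct)
    (auto intro!: clone_alg_eop_closed[OF assms] clone_alg_sop_closed[OF assms])

lemma generated_eq_eval_trm_image: "generated ar A = eval_trm A ` {t. wf_trm ar t}"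
proof
  show "generated ar A \<subseteq> eval_trm A ` {t. wf_trm ar t}"
  proof
    fix c assume "c \<in> generated ar A"
    then show "c \<in> eval_trm A ` {t. wf_trm ar t}"
    proof (induction rule: generated.induct)
      case (gen_e i)
      then have "eop A i = eval_trm A (Var (i - 1))" by simp
      then show ?case by (blast intro: wf_trm.wf_Var)
    next
      case (gen_op xs s)
      then have "set xs \<subseteq> eval_trm A ` {t. wf_trm ar t}" by auto
      then obtain ts where "set ts \<subseteq> {t. wf_trm ar t}" "xs = map (eval_trm A) ts"
        by (rule set_subset_imageE)
      with gen_op.hyps(1) show ?case
        by (auto intro!: image_eqI[of _ _ "App s ts"] wf_trm.wf_App)
    qed
  qed
next
  show "eval_trm A ` {t. wf_trm ar t} \<subseteq> generated ar A"
  proof clarify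
    fix t assume "wf_trm ar t"
    then show "eval_trm A t \<in> generated ar A"
      by (induction t rule: wf_trm.induct) (auto intro!: generated.intros)
  qed
qed

lemma minimal_clone_alg_carrier:
  "minimal_clone_alg ar A \<Longrightarrow> carrier A = eval_trm A ` {t. wf_trm ar t}"
  by (simp add: minimal_clone_alg_def generated_eq_eval_trm_image)

lemma generated_subset_carrier: "is_clone_alg ar A \<Longrightarrow> generated ar A \<subseteq> carrier A"
  by (auto simp: generated_eq_eval_trm_image intro: eval_trm_closed)

lemma eval_trm_subst:
  assumes A: "is_clone_alg ar A" and g: "\<And>i. wf_trm ar (g i)"
  shows "wf_trm ar t \<Longrightarrow> \<forall>i\<in>trm_vars t. i < N \<Longrightarrow>
    eval_trm A (subst g t) = qop A N (eval_trm A t) (map (eval_trm A \<circ> g) [0..<N])"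
proof (induction t rule: wf_trm.induct)
  case (wf_Var i)
  then show ?case
    using eval_trm_closed[OF A g] by (simp add: clone_alg_qop_eop[OF A] image_subset_iff)
next
  case (wf_App ts s)
  define ys where "ys = map (eval_trm A \<circ> g) [0..<N]"
  have ys: "length ys = N" "set ys \<subseteq> carrier A"
    unfolding ys_def using eval_trm_closed[OF A g] by auto
  have "set (map (eval_trm A) ts) \<subseteq> carrier A"
    using wf_App.hyps(2) eval_trm_closed[OF A] by auto
  then have "qop A N (eval_trm A (App s ts)) ys = sop A s (map (\<lambda>t. qop A N (eval_trm A t) ys) ts)"
    using wf_App.hyps(1) ys by (simp add: clone_alg_qop_sop[OF A] comp_def)
  also have "\<dots> = eval_trm A (subst g (App s ts))"
    using wf_App.IH wf_App.prems unfolding ys_def by (simp add: comp_def cong: map_cong)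
  finally show ?case unfolding ys_def ..
qed

lemma eval_trm_subst_prefix:
  assumes A: "is_clone_alg ar A" and t: "wf_trm ar t"
    and us: "length us = n" "set us \<subseteq> {t. wf_trm ar t}"
  shows "eval_trm A (subst (\<lambda>j. if j < n then us ! j else Var j) t)
    = qop A n (eval_trm A t) (map (eval_trm A) us)"
proof -
  define g where "g = (\<lambda>j. if j < n then us ! j else Var j)"
  have g: "wf_trm ar (g j)" for j
    using us nth_mem by (fastforce simp: g_def intro: wf_Var)
  obtain N where "\<forall>i\<in>insert n (trm_vars t). i < N"
    using finite_nat_set_iff_bounded finite_trm_vars by blast
  then have N: "\<forall>i\<in>trm_vars t. i < N" "n < N" by auto
  have "[0..<N] = [0..<n] @ [n..<N]"
    using N(2) by (metis le_add_diff_inverse less_imp_le_nat upt_add_eq_append zero_le)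
  moreover have "map (eval_trm A \<circ> g) [0..<n] = map (eval_trm A) us"
    using us(1) by (auto simp: g_def intro: nth_equalityI)
  moreover have "map (eval_trm A \<circ> g) [n..<N] = map (eop A) [n+1..<N+1]"
  proof -
    have "map (eval_trm A \<circ> g) [n..<N] = map (eop A \<circ> Suc) [n..<N]"
      by (simp add: g_def)
    then show ?thesis by (simp only: map_map[symmetric] map_Suc_upt Suc_eq_plus1)
  qed
  ultimately have "map (eval_trm A \<circ> g) [0..<N] = map (eval_trm A) us @ map (eop A) [n+1..<N+1]"
    by simp
  then have "eval_trm A (subst g t) = qop A N (eval_trm A t) (map (eval_trm A) us @ map (eop A) [n+1..<N+1])"
    using eval_trm_subst[OF A g t N(1)] by simp
  also have "\<dots> = qop A n (eval_trm A t) (map (eval_trm A) us)"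
    using us eval_trm_closed[OF A]
    by (intro clone_alg_qop_pad[OF A N(2) eval_trm_closed[OF A t], symmetric]) auto
  finally show ?thesis unfolding g_def .
qed

lemma eval_trm_hom:
  assumes A: "is_clone_alg ar A"
    and he: "\<And>i. 1 \<le> i \<Longrightarrow> h (eop A i) = eop B i"
    and hs: "\<And>s xs. length xs = ar s \<Longrightarrow> set xs \<subseteq> carrier A \<Longrightarrow> h (sop A s xs) = sop B s (map h xs)"
  shows "wf_trm ar t \<Longrightarrow> h (eval_trm A t) = eval_trm B t"
proof (induction t rule: wf_trm.induct)
  case (wf_Var i)
  then show ?case by (simp add: he)
next
  case (wf_App ts s)
  then have "set (map (eval_trm A) ts) \<subseteq> carrier A" using eval_trm_closed[OF A] by auto
  then show ?case using wf_App by (simp add: hs comp_def cong: map_cong)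
qed

lemma minimal_clone_alg_iso:
  assumes A: "is_clone_alg ar A" and iso: "clone_iso ar A B" and B: "minimal_clone_alg ar B"
  shows "minimal_clone_alg ar A"
proof -
  obtain h where bij: "bij_betw h (carrier A) (carrier B)"
    and he: "\<And>i. 1 \<le> i \<Longrightarrow> h (eop A i) = eop B i"
    and hs: "\<And>s xs. length xs = ar s \<Longrightarrow> set xs \<subseteq> carrier A \<Longrightarrow> h (sop A s xs) = sop B s (map h xs)"
    using iso unfolding clone_iso_def by blast
  have "h ` generated ar A = generated ar B"
    unfolding generated_eq_eval_trm_image image_image
    using eval_trm_hom[OF A he hs] by (auto intro!: image_cong)
  also have "\<dots> = h ` carrier A"
    using B bij by (simp add: minimal_clone_alg_def bij_betw_def)
  finally show ?thesis
    using inj_on_image_eq_iff[OF bij_betw_imp_inj_on[OF bij] generated_subset_carrier[OF A] order_refl]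
    unfolding minimal_clone_alg_def by blast
qed

lemma fi_congruence_equiv: "fi_congruence ar \<theta> \<Longrightarrow> equiv {t. wf_trm ar t} \<theta>"
  by (simp add: fi_congruence_def)

lemma fi_congruence_App:
  "fi_congruence ar \<theta> \<Longrightarrow> length ts = ar s \<Longrightarrow> length us = ar s \<Longrightarrow>
    list_all2 (\<lambda>t u. (t, u) \<in> \<theta>) ts us \<Longrightarrow> (App s ts, App s us) \<in> \<theta>"
  by (simp add: fi_congruence_def)

lemma fi_congruence_subst:
  "fi_congruence ar \<theta> \<Longrightarrow> (t, u) \<in> \<theta> \<Longrightarrow> (\<And>i. wf_trm ar (f i)) \<Longrightarrow> (subst f t, subst f u) \<in> \<theta>"
  by (simp add: fi_congruence_def)

lemma fi_congruence_subst_pointwise: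
  assumes \<theta>: "fi_congruence ar \<theta>" and fg: "\<And>i. (f i, g i) \<in> \<theta>"
  shows "wf_trm ar t \<Longrightarrow> (subst f t, subst g t) \<in> \<theta>"
proof (induction t rule: wf_trm.induct)
  case (wf_Var i)
  then show ?case using fg by simp
next
  case (wf_App ts s)
  then have "list_all2 (\<lambda>t u. (t, u) \<in> \<theta>) (map (subst f) ts) (map (subst g) ts)"
    by (auto simp: list_all2_conv_all_nth)
  then show ?case using wf_App.hyps(1) by (auto intro: fi_congruence_App[OF \<theta>])
qed

lemma rep_class_related: "equiv S \<theta> \<Longrightarrow> t \<in> S \<Longrightarrow> (t, rep (\<theta> `` {t})) \<in> \<theta>"
  unfolding rep_def by (metis Image_singleton_iff equiv_class_self someI)

lemma clone_of_var_sop_class: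
  assumes \<theta>: "fi_congruence ar \<theta>" and ts: "length ts = ar s" "set ts \<subseteq> {t. wf_trm ar t}"
  shows "sop (clone_of_var ar \<theta>) s (map (\<lambda>t. \<theta> `` {t}) ts) = \<theta> `` {App s ts}"
proof -
  have "list_all2 (\<lambda>t u. (t, u) \<in> \<theta>) ts (map (\<lambda>t. rep (\<theta> `` {t})) ts)"
    using ts(2) nth_mem rep_class_related[OF fi_congruence_equiv[OF \<theta>]]
    by (fastforce simp: list_all2_conv_all_nth)
  then have "(App s ts, App s (map (\<lambda>t. rep (\<theta> `` {t})) ts)) \<in> \<theta>"
    using ts(1) by (auto intro: fi_congruence_App[OF \<theta>])
  then show ?thesis
    using equiv_class_eq[OF fi_congruence_equiv[OF \<theta>]] by (simp add: clone_of_var_def comp_def)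
qed

lemma clone_of_var_qop_class:
  assumes \<theta>: "fi_congruence ar \<theta>" and t: "wf_trm ar t"
    and us: "length us = n" "set us \<subseteq> {t. wf_trm ar t}"
  shows "qop (clone_of_var ar \<theta>) n (\<theta> `` {t}) (map (\<lambda>u. \<theta> `` {u}) us)
    = \<theta> `` {subst (\<lambda>j. if j < n then us ! j else Var j) t}"
proof -
  have E: "equiv {t. wf_trm ar t} \<theta>" using fi_congruence_equiv[OF \<theta>] .
  define g where "g = (\<lambda>j. if j < n then us ! j else Var j)"
  \<comment> \<open>q_n of Cl(V) substitutes the chosen representatives g' instead of g\<close>
  define g' where "g' = (\<lambda>j. if j < n then rep (\<theta> `` {us ! j}) else Var j)"
  have gg': "(g j, g' j) \<in> \<theta>" for j
  proof (cases "j < n")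
    case True
    then show ?thesis using us nth_mem by (fastforce simp: g_def g'_def rep_class_related[OF E])
  next
    case False
    then show ?thesis using equiv_class_self[OF E, of "Var j"] by (simp add: g_def g'_def wf_Var)
  qed
  then have g': "wf_trm ar (g' j)" for j
    using equiv_type[OF E] by blast
  have "\<theta> `` {subst g t} = \<theta> `` {subst g' t}"
    using equiv_class_eq[OF E fi_congruence_subst_pointwise[OF \<theta> gg' t]] .
  also have "\<dots> = \<theta> `` {subst g' (rep (\<theta> `` {t}))}"
    using equiv_class_eq[OF E fi_congruence_subst[OF \<theta> rep_class_related[OF E] g']] t by simp
  finally show ?thesis
    using us(1) by (simp add: clone_of_var_def g_def g'_def cong: if_cong)
qed

lemma eval_trm_clone_of_var:
  assumes \<theta>: "fi_congruence ar \<theta>"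
  shows "wf_trm ar t \<Longrightarrow> eval_trm (clone_of_var ar \<theta>) t = \<theta> `` {t}"
proof (induction t rule: wf_trm.induct)
  case (wf_Var i)
  then show ?case by (simp add: clone_of_var_def)
next
  case (wf_App ts s)
  then have "eval_trm (clone_of_var ar \<theta>) (App s ts) = sop (clone_of_var ar \<theta>) s (map (\<lambda>t. \<theta> `` {t}) ts)"
    by (simp cong: map_cong)
  also have "\<dots> = \<theta> `` {App s ts}"
    using wf_App.hyps by (intro clone_of_var_sop_class[OF \<theta>]) auto
  finally show ?case .
qed

lemma minimal_clone_of_var:
  assumes \<theta>: "fi_congruence ar \<theta>"
  shows "minimal_clone_alg ar (clone_of_var ar \<theta>)"
proof -
  have "eval_trm (clone_of_var ar \<theta>) ` {t. wf_trm ar t} = (\<lambda>t. \<theta> `` {t}) ` {t. wf_trm ar t}"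
    by (rule image_cong) (simp_all add: eval_trm_clone_of_var[OF \<theta>])
  then show ?thesis
    by (simp add: minimal_clone_alg_def generated_eq_eval_trm_image clone_of_var_def quotient_def
        UNION_singleton_eq_range)
qed

definition eval_kernel :: "('s \<Rightarrow> nat) \<Rightarrow> ('s, 'c) clone_alg \<Rightarrow> ('s trm \<times> 's trm) set" where
  "eval_kernel ar A = {(t, u). wf_trm ar t \<and> wf_trm ar u \<and> eval_trm A t = eval_trm A u}"

lemma fi_congruence_eval_kernel:
  fixes ar :: "'s \<Rightarrow> nat" and A :: "('s, 'c) clone_alg"
  assumes A: "is_clone_alg ar A"
  shows "fi_congruence ar (eval_kernel ar A)"
  unfolding fi_congruence_def
proof (intro conjI allI impI)
  show "equiv {t. wf_trm ar t} (eval_kernel ar A)"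
    unfolding eval_kernel_def by (rule equivI) (auto simp: refl_on_def sym_def trans_def)
next
  fix s ts us
  assume tsus: "length ts = ar s \<and> length us = ar s \<and> list_all2 (\<lambda>t u. (t, u) \<in> eval_kernel ar A) ts us"
  then have "map (eval_trm A) ts = map (eval_trm A) us"
    by (auto simp: eval_kernel_def list_all2_conv_all_nth intro: nth_equalityI)
  with tsus show "(App s ts, App s us) \<in> eval_kernel ar A"
    by (auto simp: eval_kernel_def list_all2_conv_all_nth in_set_conv_nth intro!: wf_App)
next
  fix f :: "nat \<Rightarrow> 's trm" and t u
  assume tu: "(t, u) \<in> eval_kernel ar A \<and> (\<forall>i. wf_trm ar (f i))"
  obtain N where N: "\<forall>i\<in>trm_vars t \<union> trm_vars u. i < N"
    using finite_nat_set_iff_bounded finite_trm_vars by (metis finite_Un)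
  then show "(subst f t, subst f u) \<in> eval_kernel ar A"
    using tu eval_trm_subst[OF A, of f t N] eval_trm_subst[OF A, of f u N]
    by (auto simp: eval_kernel_def intro: wf_trm_subst)
qed

definition eval_fiber :: "('s \<Rightarrow> nat) \<Rightarrow> ('s, 'c) clone_alg \<Rightarrow> 'c \<Rightarrow> 's trm set" where
  "eval_fiber ar A c = {t. wf_trm ar t \<and> eval_trm A t = c}"

lemma eval_fiber_eval_trm: "wf_trm ar t \<Longrightarrow> eval_fiber ar A (eval_trm A t) = eval_kernel ar A `` {t}"
  by (auto simp: eval_fiber_def eval_kernel_def)

lemma map_eval_fiber_eval_trm:
  "set ts \<subseteq> {t. wf_trm ar t} \<Longrightarrow>
    map (eval_fiber ar A) (map (eval_trm A) ts) = map (\<lambda>t. eval_kernel ar A `` {t}) ts"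
  by (auto simp: eval_fiber_eval_trm)

lemma bij_betw_eval_fiber:
  assumes "minimal_clone_alg ar A"
  shows "bij_betw (eval_fiber ar A) (carrier A) (carrier (clone_of_var ar (eval_kernel ar A)))"
proof -
  note carrier = minimal_clone_alg_carrier[OF assms]
  have "inj_on (eval_fiber ar A) (carrier A)"
    unfolding carrier by (rule inj_onI) (auto simp: eval_fiber_def)
  moreover have "eval_fiber ar A ` carrier A = carrier (clone_of_var ar (eval_kernel ar A))"
    unfolding carrier image_image
    by (auto simp: eval_fiber_eval_trm clone_of_var_def quotient_def)
  ultimately show ?thesis
    by (simp add: bij_betw_def)
qed

lemma eval_fiber_sop:
  assumes A: "is_clone_alg ar A" and ts: "length ts = ar s" "set ts \<subseteq> {t. wf_trm ar t}"
  shows "eval_fiber ar A (sop A s (map (eval_trm A) ts))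
    = sop (clone_of_var ar (eval_kernel ar A)) s (map (eval_fiber ar A) (map (eval_trm A) ts))"
proof -
  have "eval_fiber ar A (eval_trm A (App s ts)) = eval_kernel ar A `` {App s ts}"
    using ts by (intro eval_fiber_eval_trm wf_App) auto
  then show ?thesis
    unfolding map_eval_fiber_eval_trm[OF ts(2)] using ts
    by (simp add: clone_of_var_sop_class[OF fi_congruence_eval_kernel[OF A]] subset_iff)
qed

lemma eval_fiber_qop:
  assumes A: "is_clone_alg ar A" and t: "wf_trm ar t"
    and us: "length us = n" "set us \<subseteq> {t. wf_trm ar t}"
  shows "eval_fiber ar A (qop A n (eval_trm A t) (map (eval_trm A) us))
    = qop (clone_of_var ar (eval_kernel ar A)) n
        (eval_fiber ar A (eval_trm A t)) (map (eval_fiber ar A) (map (eval_trm A) us))"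
proof -
  let ?g = "\<lambda>j. if j < n then us ! j else Var j"
  have "eval_fiber ar A (qop A n (eval_trm A t) (map (eval_trm A) us))
      = eval_fiber ar A (eval_trm A (subst ?g t))"
    using eval_trm_subst_prefix[OF A t, of us n] us by (simp add: subset_iff)
  also have "\<dots> = eval_kernel ar A `` {subst ?g t}"
    using t us by (intro eval_fiber_eval_trm wf_trm_subst) (auto intro: wf_Var nth_mem)
  finally show ?thesis
    unfolding map_eval_fiber_eval_trm[OF us(2)] eval_fiber_eval_trm[OF t]
    using clone_of_var_qop_class[OF fi_congruence_eval_kernel[OF A] t, of us n] us
    by (simp add: subset_iff)
qed

lemma clone_iso_clone_of_var_eval_kernel:
  assumes A: "is_clone_alg ar A" and M: "minimal_clone_alg ar A"
  shows "clone_iso ar A (clone_of_var ar (eval_kernel ar A))"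
  unfolding clone_iso_def
proof (intro exI conjI allI impI)
  show "bij_betw (eval_fiber ar A) (carrier A) (carrier (clone_of_var ar (eval_kernel ar A)))"
    using bij_betw_eval_fiber[OF M] .
  fix i :: nat assume "1 \<le> i"
  then show "eval_fiber ar A (eop A i) = eop (clone_of_var ar (eval_kernel ar A)) i"
    using eval_fiber_eval_trm[of ar "Var (i - 1)" A, OF wf_Var] by (simp add: clone_of_var_def)
next
  fix s xs assume xs: "length xs = ar s \<and> set xs \<subseteq> carrier A"
  then obtain ts where "set ts \<subseteq> {t. wf_trm ar t}" "xs = map (eval_trm A) ts"
    unfolding minimal_clone_alg_carrier[OF M] by (auto elim: set_subset_imageE)
  then show "eval_fiber ar A (sop A s xs)
      = sop (clone_of_var ar (eval_kernel ar A)) s (map (eval_fiber ar A) xs)"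
    using eval_fiber_sop[OF A] xs by simp
next
  fix n x ys assume xys: "x \<in> carrier A \<and> length ys = n \<and> set ys \<subseteq> carrier A"
  then obtain t us where "wf_trm ar t" "x = eval_trm A t"
    and "set us \<subseteq> {t. wf_trm ar t}" "ys = map (eval_trm A) us"
    unfolding minimal_clone_alg_carrier[OF M] by (auto elim: set_subset_imageE)
  then show "eval_fiber ar A (qop A n x ys)
      = qop (clone_of_var ar (eval_kernel ar A)) n (eval_fiber ar A x) (map (eval_fiber ar A) ys)"
    using eval_fiber_qop[OF A] xys by simp
qed

theorem corollary11p9:
  fixes ar :: "'s \<Rightarrow> nat" and A :: "('s, 'c) clone_alg"
  assumes "is_clone_alg ar A"
  shows "minimal_clone_alg ar A \<longleftrightarrow>
         (\<exists>\<theta>. fi_congruence ar \<theta> \<and> clone_iso ar A (clone_of_var ar \<theta>))"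
proof
  assume "minimal_clone_alg ar A"
  then show "\<exists>\<theta>. fi_congruence ar \<theta> \<and> clone_iso ar A (clone_of_var ar \<theta>)"
    using fi_congruence_eval_kernel[OF assms] clone_iso_clone_of_var_eval_kernel[OF assms] by blast
next
  assume "\<exists>\<theta>. fi_congruence ar \<theta> \<and> clone_iso ar A (clone_of_var ar \<theta>)"
  then show "minimal_clone_alg ar A"
    using minimal_clone_alg_iso[OF assms] minimal_clone_of_var by blast
qed

end
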